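(* Fix a substate $j\in\{1,\dots,N\}$, a time $k$, a node $i\in\mathcal{V}\setminus\{j\}$ and $m\in\mathbb{N}_+$, and suppose $\tau^{(j)}_i[k]=m$. Then, under the rules of the freshness-index algorithm (for any choice of the gains $\mathbf{L}_1,\dots,\mathbf{L}_N$ and any initial estimates), there exist nodes $v(\tau)\in\mathcal{V}\setminus\{j\}$, $\tau=k-m,\dots,k-1$, such that $$\hat{\mathbf{z}}^{(j)}_i[k]=\mathbf{A}_{jj}^{m}\,\hat{\mathbf{z}}^{(j)}_j[k-m]+\sum_{q=1}^{j-1}\sum_{\tau=k-m}^{k-1}\mathbf{A}_{jj}^{\,k-\tau-1}\mathbf{A}_{jq}\,\hat{\mathbf{z}}^{(q)}_{v(\tau)}[\tau].$$
   Context: Graphs. Nodes $\mathcal{V}=\{1,\dots,N\}$. At each time $k\in\mathbb{N}=\{0,1,2,\dots\}$ there is a directed graph $\mathcal{G}[k]=(\mathcal{V},\mathcal{E}[k])$; $(i,j)\in\mathcal{E}[k]$ means node $i$ can send information to node $j$ at time $k$. $\mathcal{N}_i[k]=\{l\neq i:(l,i)\in\mathcal{E}[k]\}$ is the set of neighbors of $i$ at time $k$. System. $\mathbf{x}[k+1]=\mathbf{A}\mathbf{x}[k]$, $\mathbf{y}_i[k]=\mathbf{C}_i\mathbf{x}[k]$, $\mathbf{A}\in\mathbb{R}^{n\times n}$. An invertible $\mathbf{T}$ is fixed such that with $\mathbf{x}[k]=\mathbf{T}\mathbf{z}[k]$ one has $\mathbf{z}[k+1]=\bar{\mathbf{A}}\mathbf{z}[k]$,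 where $\mathbf{z}=[\mathbf{z}^{(1)T}\cdots\mathbf{z}^{(N)T}]^T$ with $\mathbf{z}^{(j)}\in\mathbb{R}^{n_j}$ ("substate $j$"), $\bar{\mathbf{A}}=\mathbf{T}^{-1}\mathbf{A}\mathbf{T}$ is block lower triangular with blocks $\mathbf{A}_{jq}$ ($\mathbf{A}_{jq}=0$ for $q>j$); and $\mathbf{C}_i\mathbf{T}=[\mathbf{C}_{i1}\ \cdots\ \mathbf{C}_{ii}\ 0\ \cdots\ 0]$. Node $j$ is called the source node of substate $j$. Freshness indices. For each substate $j$ and node $i$, node $i$ keeps $\tau^{(j)}_i[k]\in\{\omega\}\cup\mathbb{N}$, where $\omega$ is a special symbol. Initialization: $\tau^{(j)}_j[0]=0$, $\tau^{(j)}_i[0]=\omega$ for $i\neq j$. The source keeps $\tau^{(j)}_j[k]=0$ for all $k$. For $i\neq j$, let $\mathcal{M}^{(j)}_i[k]=\{l\in\mathcal{N}_i[k]:\tau^{(j)}_l[k]\neq\omega\}$. Case 1, $\tau^{(j)}_i[k]=\omega$: if $\mathcal{M}^{(j)}_i[k]\neq\emptyset$, let $u$ be any minimizer of $\tau^{(j)}_l[k]$ over $l\in\mathcal{M}^{(j)}_i[k]$, set $\tau^{(j)}_i[k+1]=\tau^{(j)}_u[k]+1$ and perform an "adopt-$u$" estimate update; otherwise set $\tau^{(j)}_i[k+1]=\omega$ and perform an "open-loop" estimate update. Case 2, $\tau^{(j)}_i[k]\neq\omega$: let $\mathcal{F}^{(j)}_i[k]=\{l\in\mathcal{M}^{(j)}_i[k]:\tau^{(j)}_l[k]<\tau^{(j)}_i[k]\}$;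 if nonempty, let $u$ be any minimizer of $\tau^{(j)}_l[k]$ over $\mathcal{F}^{(j)}_i[k]$, set $\tau^{(j)}_i[k+1]=\tau^{(j)}_u[k]+1$ and perform an adopt-$u$ update; otherwise set $\tau^{(j)}_i[k+1]=\tau^{(j)}_i[k]+1$ and perform an open-loop update. Estimates. Each node $i$ keeps $\hat{\mathbf{z}}_i[k]=[\hat{\mathbf{z}}^{(1)T}_i[k]\cdots\hat{\mathbf{z}}^{(N)T}_i[k]]^T$, with arbitrary initial value. Source update for substate $j$: $\hat{\mathbf{z}}^{(j)}_j[k+1]=(\mathbf{A}_{jj}-\mathbf{L}_j\mathbf{C}_{jj})\hat{\mathbf{z}}^{(j)}_j[k]+\sum_{q=1}^{j-1}(\mathbf{A}_{jq}-\mathbf{L}_j\mathbf{C}_{jq})\hat{\mathbf{z}}^{(q)}_j[k]+\mathbf{L}_j\mathbf{y}_j[k]$. Adopt-$u$ update at node $i\ne j$: $\hat{\mathbf{z}}^{(j)}_i[k+1]=\mathbf{A}_{jj}\hat{\mathbf{z}}^{(j)}_u[k]+\sum_{q=1}^{j-1}\mathbf{A}_{jq}\hat{\mathbf{z}}^{(q)}_i[k]$. Open-loop update at node $i\neq j$: $\hat{\mathbf{z}}^{(j)}_i[k+1]=\mathbf{A}_{jj}\hat{\mathbf{z}}^{(j)}_i[k]+\sum_{q=1}^{j-1}\mathbf{A}_{jq}\hat{\mathbf{z}}^{(q)}_i[k]$. These updates are carried out for every substate $j$ at every time $k$. *)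

theory Defs
  imports "Jordan_Normal_Form.Matrix"
begin

definition vsum :: "nat \<Rightarrow> ('b \<Rightarrow> real vec) \<Rightarrow> 'b set \<Rightarrow> real vec" where
  "vsum d f S = vec d (\<lambda>r. \<Sum>s\<in>S. f s $ r)"

definition nbrs :: "(nat \<Rightarrow> (nat \<times> nat) set) \<Rightarrow> nat \<Rightarrow> nat \<Rightarrow> nat set" where
  "nbrs E i k = {l. l \<noteq> i \<and> (l, i) \<in> E k}"

text \<open>Plant in the transformed coordinates z = T^-1 x: substates z j k (j = 1..N),
  block lower triangular dynamics and outputs y_i = sum_{q<=i} C_iq z^(q).\<close>
definition plant ::
  "nat \<Rightarrow> (nat \<Rightarrow> nat) \<Rightarrow> (nat \<Rightarrow> nat) \<Rightarrow> (nat \<Rightarrow> nat \<Rightarrow> real mat) \<Rightarrow>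
   (nat \<Rightarrow> nat \<Rightarrow> real mat) \<Rightarrow> (nat \<Rightarrow> nat \<Rightarrow> real vec) \<Rightarrow>
   (nat \<Rightarrow> nat \<Rightarrow> real vec) \<Rightarrow> bool" where
  "plant N n p Ab C z y \<longleftrightarrow>
     (\<forall>j\<in>{1..N}. \<forall>q\<in>{1..N}. Ab j q \<in> carrier_mat (n j) (n q)
                            \<and> C j q \<in> carrier_mat (p j) (n q)) \<and>
     (\<forall>j\<in>{1..N}. z j 0 \<in> carrier_vec (n j)) \<and>
     (\<forall>j\<in>{1..N}. \<forall>k. z j (Suc k) = vsum (n j) (\<lambda>q. Ab j q *\<^sub>v z q k) {1..j}) \<and>
     (\<forall>i\<in>{1..N}. \<forall>k. y i k = vsum (p i) (\<lambda>q. C i q *\<^sub>v z q k) {1..i})"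

text \<open>Adopt-u and open-loop updates of substate j at node i
  (estimates: zh i j k = estimate of substate j held by node i at time k).\<close>
definition adopt_upd ::
  "(nat \<Rightarrow> nat) \<Rightarrow> (nat \<Rightarrow> nat \<Rightarrow> real mat) \<Rightarrow> (nat \<Rightarrow> nat \<Rightarrow> nat \<Rightarrow> real vec) \<Rightarrow>
   nat \<Rightarrow> nat \<Rightarrow> nat \<Rightarrow> nat \<Rightarrow> real vec" where
  "adopt_upd n Ab zh j i u k =
     Ab j j *\<^sub>v zh u j k + vsum (n j) (\<lambda>q. Ab j q *\<^sub>v zh i q k) {1..<j}"

definition openloop_upd ::
  "(nat \<Rightarrow> nat) \<Rightarrow> (nat \<Rightarrow> nat \<Rightarrow> real mat) \<Rightarrow> (nat \<Rightarrow> nat \<Rightarrow> nat \<Rightarrow> real vec) \<Rightarrow>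
   nat \<Rightarrow> nat \<Rightarrow> nat \<Rightarrow> real vec" where
  "openloop_upd n Ab zh j i k =
     Ab j j *\<^sub>v zh i j k + vsum (n j) (\<lambda>q. Ab j q *\<^sub>v zh i q k) {1..<j}"

text \<open>One step of the freshness-index algorithm for substate j at node i /= j, time k.
  The index omega is represented by None.  The minimiser u may be any minimiser.\<close>
definition fresh_step ::
  "(nat \<Rightarrow> (nat \<times> nat) set) \<Rightarrow> (nat \<Rightarrow> nat) \<Rightarrow> (nat \<Rightarrow> nat \<Rightarrow> real mat) \<Rightarrow>
   (nat \<Rightarrow> nat \<Rightarrow> nat \<Rightarrow> nat option) \<Rightarrow> (nat \<Rightarrow> nat \<Rightarrow> nat \<Rightarrow> real vec) \<Rightarrow>
   nat \<Rightarrow> nat \<Rightarrow> nat \<Rightarrow> bool" where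
  "fresh_step E n Ab tau zh j i k \<longleftrightarrow>
     (let M = {l \<in> nbrs E i k. tau j l k \<noteq> None} in
      case tau j i k of
        None \<Rightarrow>
          (if M \<noteq> {} then
             (\<exists>u\<in>M. (\<forall>l\<in>M. the (tau j u k) \<le> the (tau j l k)) \<and>
                     tau j i (Suc k) = Some (the (tau j u k) + 1) \<and>
                     zh i j (Suc k) = adopt_upd n Ab zh j i u k)
           else
             tau j i (Suc k) = None \<and> zh i j (Suc k) = openloop_upd n Ab zh j i k)
      | Some t \<Rightarrow>
          (let F = {l \<in> M. the (tau j l k) < t} in
           if F \<noteq> {} then
             (\<exists>u\<in>F. (\<forall>l\<in>F. the (tau j u k) \<le> the (tau j l k)) \<and>
                     tau j i (Suc k) = Some (the (tau j u k) + 1) \<and>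
                     zh i j (Suc k) = adopt_upd n Ab zh j i u k)
           else
             tau j i (Suc k) = Some (t + 1) \<and> zh i j (Suc k) = openloop_upd n Ab zh j i k))"

definition fresh_run ::
  "nat \<Rightarrow> (nat \<Rightarrow> (nat \<times> nat) set) \<Rightarrow> (nat \<Rightarrow> nat) \<Rightarrow> (nat \<Rightarrow> nat \<Rightarrow> real mat) \<Rightarrow>
   (nat \<Rightarrow> nat \<Rightarrow> real mat) \<Rightarrow> (nat \<Rightarrow> real mat) \<Rightarrow> (nat \<Rightarrow> nat \<Rightarrow> real vec) \<Rightarrow>
   (nat \<Rightarrow> nat \<Rightarrow> nat \<Rightarrow> nat option) \<Rightarrow> (nat \<Rightarrow> nat \<Rightarrow> nat \<Rightarrow> real vec) \<Rightarrow> bool" where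
  "fresh_run N E n Ab C L y tau zh \<longleftrightarrow>
     (\<forall>i\<in>{1..N}. \<forall>j\<in>{1..N}. zh i j 0 \<in> carrier_vec (n j)) \<and>
     (\<forall>j\<in>{1..N}. \<forall>i\<in>{1..N}. tau j i 0 = (if i = j then Some 0 else None)) \<and>
     (\<forall>j\<in>{1..N}. \<forall>k. tau j j k = Some 0) \<and>
     (\<forall>j\<in>{1..N}. \<forall>k. zh j j (Suc k) =
         (Ab j j - L j * C j j) *\<^sub>v zh j j k
         + vsum (n j) (\<lambda>q. (Ab j q - L j * C j q) *\<^sub>v zh j q k) {1..<j}
         + L j *\<^sub>v y j k) \<and>
     (\<forall>j\<in>{1..N}. \<forall>i\<in>{1..N}. i \<noteq> j \<longrightarrow> (\<forall>k. fresh_step E n Ab tau zh j i k))"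

end

theory Submission
  imports Defs
begin

text \<open>Every update of a non-source node \<open>i\<close> is an adopt-\<open>u\<close> update for some \<open>u\<close> (the
  open-loop update is the adopt-\<open>i\<close> update), and whenever \<open>i\<close> ends up with index \<open>s + 1\<close>
  the adopted node had index \<open>s\<close> one step earlier. Following the adopted nodes backwards
  from index \<open>m\<close> at time \<open>k\<close> therefore reaches the source \<open>j\<close>, the only node with index 0,
  at time \<open>k - m\<close>. Unrolling the \<open>m\<close> adopt updates along this chain gives the closed form,
  with \<open>v(\<tau>)\<close> the node performing the update at time \<open>\<tau>\<close>.\<close>

lemma dim_vsum [simp]: "dim_vec (vsum d f S) = d"
  by (simp add: vsum_def)

lemma vsum_carrier [simp]: "vsum d f S \<in> carrier_vec d"
  by (rule carrier_vecI) simp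

lemma index_vsum [simp]: "r < d \<Longrightarrow> vsum d f S $ r = (\<Sum>s\<in>S. f s $ r)"
  by (simp add: vsum_def)

lemma vsum_cong: "(\<And>s. s \<in> S \<Longrightarrow> f s = g s) \<Longrightarrow> vsum d f S = vsum d g S"
  unfolding vsum_def by (metis (no_types, lifting) sum.cong)

lemma vsum_empty [simp]: "vsum d f {} = 0\<^sub>v d"
  by (intro eq_vecI) simp_all

lemma vsum_zero [simp]: "vsum d (\<lambda>s. 0\<^sub>v d) S = 0\<^sub>v d"
  by (intro eq_vecI) simp_all

lemma vsum_add:
  "(\<And>s. s \<in> S \<Longrightarrow> dim_vec (g s) = d) \<Longrightarrow> vsum d f S + vsum d g S = vsum d (\<lambda>s. f s + g s) S"
  by (intro eq_vecI) (auto simp: sum.distrib)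

lemma vsum_insert:
  "finite S \<Longrightarrow> x \<notin> S \<Longrightarrow> dim_vec (f x) = d \<Longrightarrow> vsum d f (insert x S) = vsum d f S + f x"
  by (intro eq_vecI) (auto simp: add.commute)

lemma mult_mat_vec_vsum:
  assumes "\<And>s. s \<in> S \<Longrightarrow> dim_vec (f s) = d" "dim_col A = d"
  shows "A *\<^sub>v vsum d f S = vsum (dim_row A) (\<lambda>s. A *\<^sub>v f s) S"
proof (intro eq_vecI)
  fix r assume "r < dim_vec (vsum (dim_row A) (\<lambda>s. A *\<^sub>v f s) S)"
  then have r: "r < dim_row A" by simp
  have "(A *\<^sub>v vsum d f S) $ r = (\<Sum>c<d. A $$ (r, c) * (\<Sum>s\<in>S. f s $ c))"
    using r assms(2) by (simp add: scalar_prod_def lessThan_atLeast0)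
  also have "\<dots> = (\<Sum>s\<in>S. \<Sum>c<d. A $$ (r, c) * f s $ c)"
    unfolding sum_distrib_left by (rule sum.swap)
  also have "\<dots> = vsum (dim_row A) (\<lambda>s. A *\<^sub>v f s) S $ r"
    using r assms by (auto simp: scalar_prod_def lessThan_atLeast0 intro!: sum.cong)
  finally show "(A *\<^sub>v vsum d f S) $ r = vsum (dim_row A) (\<lambda>s. A *\<^sub>v f s) S $ r" .
qed simp

lemma pow_mat_Suc_left:
  assumes "A \<in> carrier_mat n n"
  shows "A * A ^\<^sub>m p = A ^\<^sub>m Suc p"
proof (induction p)
  case (Suc p)
  have "A * A ^\<^sub>m Suc p = (A * A ^\<^sub>m p) * A"
    using assms by (simp add: assoc_mult_mat[of _ n n _ n _ n])
  then show ?case using Suc by simp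
qed (use assms in simp)

lemma mult_mat_vec_pow_mat_mult:
  assumes A: "A \<in> carrier_mat n n" and B: "B \<in> carrier_mat n d" and x: "x \<in> carrier_vec d"
  shows "A *\<^sub>v ((A ^\<^sub>m p * B) *\<^sub>v x) = (A ^\<^sub>m Suc p * B) *\<^sub>v x"
proof -
  have Ap: "A ^\<^sub>m p \<in> carrier_mat n n" using A by simp
  have "A *\<^sub>v ((A ^\<^sub>m p * B) *\<^sub>v x) = (A * (A ^\<^sub>m p * B)) *\<^sub>v x"
    using assoc_mult_mat_vec[OF A mult_carrier_mat[OF Ap B] x] by simp
  also have "\<dots> = (A * A ^\<^sub>m p * B) *\<^sub>v x"
    using assoc_mult_mat[OF A Ap B] by simp
  finally show ?thesis using pow_mat_Suc_left[OF A] by simp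
qed

text \<open>One further adopt update extends the closed form by one time step; the new input terms
  \<open>B q *\<^sub>v g q k\<close> are the \<open>\<tau> = k\<close> summands, whose power of \<open>A\<close> is \<open>A\<^sup>0\<close>.\<close>

lemma closed_form_Suc:
  fixes A :: "real mat" and B :: "nat \<Rightarrow> real mat" and g :: "nat \<Rightarrow> nat \<Rightarrow> real vec"
  assumes A: "A \<in> carrier_mat n n" and x: "x \<in> carrier_vec n"
    and B: "\<And>q. q \<in> Q \<Longrightarrow> B q \<in> carrier_mat n (d q)"
    and g: "\<And>q t. q \<in> Q \<Longrightarrow> t \<in> {Suc k - Suc m..<Suc k} \<Longrightarrow> g q t \<in> carrier_vec (d q)"
  shows "A *\<^sub>v (A ^\<^sub>m m *\<^sub>v x
           + vsum n (\<lambda>q. vsum n (\<lambda>t. (A ^\<^sub>m (k - t - 1) * B q) *\<^sub>v g q t) {k - m..<k}) Q)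
         + vsum n (\<lambda>q. B q *\<^sub>v g q k) Q
       = A ^\<^sub>m Suc m *\<^sub>v x
         + vsum n (\<lambda>q. vsum n (\<lambda>t. (A ^\<^sub>m (Suc k - t - 1) * B q) *\<^sub>v g q t)
             {Suc k - Suc m..<Suc k}) Q"
proof -
  define I where "I = {k - m..<k}"
  define F where "F q t = (A ^\<^sub>m (Suc k - t - 1) * B q) *\<^sub>v g q t" for q t
  have I: "{Suc k - Suc m..<Suc k} = insert k I" "finite I" "k \<notin> I"
    by (auto simp: I_def)
  have dim_F: "dim_vec (F q t) = n" for q t
    using A by (simp add: F_def)
  have "A *\<^sub>v vsum n (\<lambda>q. vsum n (\<lambda>t. (A ^\<^sub>m (k - t - 1) * B q) *\<^sub>v g q t) I) Q
      = vsum n (\<lambda>q. vsum n (\<lambda>t. A *\<^sub>v ((A ^\<^sub>m (k - t - 1) * B q) *\<^sub>v g q t)) I) Q"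
    using A by (simp add: mult_mat_vec_vsum)
  also have "\<dots> = vsum n (\<lambda>q. vsum n (F q) I) Q"
  proof (intro vsum_cong)
    fix q t assume q: "q \<in> Q" and t: "t \<in> I"
    have "Suc (k - t - 1) = Suc k - t - 1" using t by (auto simp: I_def)
    then show "A *\<^sub>v ((A ^\<^sub>m (k - t - 1) * B q) *\<^sub>v g q t) = F q t"
      using mult_mat_vec_pow_mat_mult[OF A B[OF q] g[OF q], of t "k - t - 1"] t
      unfolding F_def I(1) by simp
  qed
  finally have push: "A *\<^sub>v vsum n (\<lambda>q. vsum n (\<lambda>t. (A ^\<^sub>m (k - t - 1) * B q) *\<^sub>v g q t) I) Q
      = vsum n (\<lambda>q. vsum n (F q) I) Q" .
  have new: "B q *\<^sub>v g q k = F q k" if "q \<in> Q" for q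
    using A B[OF that] by (simp add: F_def carrier_matD)
  have pow: "A *\<^sub>v (A ^\<^sub>m m *\<^sub>v x) = A ^\<^sub>m Suc m *\<^sub>v x"
    using A x by (simp add: pow_mat_Suc_left assoc_mult_mat_vec[symmetric, of _ n n _ n])
  have "A *\<^sub>v (A ^\<^sub>m m *\<^sub>v x
           + vsum n (\<lambda>q. vsum n (\<lambda>t. (A ^\<^sub>m (k - t - 1) * B q) *\<^sub>v g q t) I) Q)
      = A ^\<^sub>m Suc m *\<^sub>v x + vsum n (\<lambda>q. vsum n (F q) I) Q"
    unfolding push[symmetric] pow[symmetric]
    using A x by (auto intro!: mult_add_distrib_mat_vec mult_mat_vec_carrier)
  also have "\<dots> + vsum n (\<lambda>q. B q *\<^sub>v g q k) Q
      = A ^\<^sub>m Suc m *\<^sub>v x + (vsum n (\<lambda>q. vsum n (F q) I) Q + vsum n (\<lambda>q. F q k) Q)"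
    using vsum_cong[of Q "\<lambda>q. B q *\<^sub>v g q k", OF new] A x
    by (simp del: pow_mat.simps add: assoc_add_vec[OF mult_mat_vec_carrier[OF pow_carrier_mat]])
  also have "\<dots> = A ^\<^sub>m Suc m *\<^sub>v x + vsum n (\<lambda>q. vsum n (F q) (insert k I)) Q"
    using I by (simp add: vsum_add dim_F vsum_insert)
  finally show ?thesis unfolding I(1) F_def I_def .
qed

lemma fresh_step_adopt:
  assumes "fresh_step E n Ab tau zh j i k"
  shows "\<exists>u. zh i j (Suc k) = adopt_upd n Ab zh j i u k"
proof (cases "tau j i k")
  case None
  then show ?thesis
    using assms unfolding fresh_step_def Let_def
    by (cases "{l \<in> nbrs E i k. tau j l k \<noteq> None} = {}")
      (auto simp: openloop_upd_def adopt_upd_def)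
next
  case (Some t)
  then show ?thesis
    using assms unfolding fresh_step_def Let_def
    by (cases "{l \<in> {l \<in> nbrs E i k. tau j l k \<noteq> None}. the (tau j l k) < t} = {}")
      (auto simp: openloop_upd_def adopt_upd_def)
qed

lemma fresh_step_Some:
  assumes step: "fresh_step E n Ab tau zh j i k" and tau: "tau j i (Suc k) = Some s"
  shows "\<exists>u s'. s = Suc s' \<and> (u = i \<or> u \<in> nbrs E i k) \<and> tau j u k = Some s'
           \<and> zh i j (Suc k) = adopt_upd n Ab zh j i u k"
proof (cases "tau j i k")
  case None
  then show ?thesis
    using step tau unfolding fresh_step_def Let_def
    by (cases "{l \<in> nbrs E i k. tau j l k \<noteq> None} = {}") auto
next
  case (Some t)
  then show ?thesis
    using step tau unfolding fresh_step_def Let_def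
    by (cases "{l \<in> {l \<in> nbrs E i k. tau j l k \<noteq> None}. the (tau j l k) < t} = {}")
      (auto simp: openloop_upd_def adopt_upd_def)
qed

lemma fresh_run_Some:
  assumes graph: "\<forall>k. E k \<subseteq> {1..N} \<times> {1..N}"
    and run: "fresh_run N E n Ab C L y tau zh"
    and j: "j \<in> {1..N}" and w: "w \<in> {1..N}" "w \<noteq> j"
    and tau: "tau j w k = Some s"
  shows "\<exists>k' u s'. k = Suc k' \<and> s = Suc s' \<and> u \<in> {1..N} \<and> tau j u k' = Some s'
           \<and> zh w j k = adopt_upd n Ab zh j w u k'"
proof (cases k)
  case 0
  then show ?thesis using run j w tau by (simp add: fresh_run_def)
next
  case (Suc k')
  have "fresh_step E n Ab tau zh j w k'"
    using run j w by (simp add: fresh_run_def)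
  from fresh_step_Some[OF this] obtain u s' where
    "s = Suc s'" "u = w \<or> u \<in> nbrs E w k'" "tau j u k' = Some s'"
    "zh w j (Suc k') = adopt_upd n Ab zh j w u k'"
    using tau Suc by blast
  moreover have "u \<in> {1..N}"
    using \<open>u = w \<or> u \<in> nbrs E w k'\<close> graph w unfolding nbrs_def by blast
  ultimately show ?thesis using Suc by blast
qed

lemma fresh_run_estimate_carrier:
  assumes run: "fresh_run N E n Ab C L y tau zh"
    and gains: "\<forall>j\<in>{1..N}. L j \<in> carrier_mat (n j) (p j)"
    and a: "a \<in> {1..N}" and b: "b \<in> {1..N}"
  shows "zh a b t \<in> carrier_vec (n b)"
proof (cases t)
  case 0
  then show ?thesis using run a b by (simp add: fresh_run_def)
next
  case (Suc t')
  show ?thesis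
  proof (cases "a = b")
    case True
    have "dim_row (L b) = n b" using gains b by auto
    then show ?thesis
      using run b True Suc unfolding fresh_run_def by (auto intro!: carrier_vecI)
  next
    case False
    then have "fresh_step E n Ab tau zh b a t'"
      using run a b by (simp add: fresh_run_def)
    from fresh_step_adopt[OF this] obtain u where "zh a b t = adopt_upd n Ab zh b a u t'"
      using Suc by blast
    then show ?thesis by (simp add: adopt_upd_def carrier_vecI)
  qed
qed

lemma fresh_run_closed_form:
  assumes graph: "\<forall>k. E k \<subseteq> {1..N} \<times> {1..N}"
    and plant: "plant N n p Ab C z y"
    and gains: "\<forall>j\<in>{1..N}. L j \<in> carrier_mat (n j) (p j)"
    and run: "fresh_run N E n Ab C L y tau zh"
    and j: "j \<in> {1..N}" and w: "w \<in> {1..N}" and tau: "tau j w k = Some m"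
  shows "\<exists>v. (\<forall>t\<in>{k - m..<k}. v t \<in> {1..N} - {j}) \<and>
      zh w j k = (Ab j j ^\<^sub>m m) *\<^sub>v zh j j (k - m)
        + vsum (n j) (\<lambda>q. vsum (n j)
            (\<lambda>t. (Ab j j ^\<^sub>m (k - t - 1) * Ab j q) *\<^sub>v zh (v t) q t) {k - m..<k}) {1..<j}"
proof -
  have A: "Ab j j \<in> carrier_mat (n j) (n j)"
    and B: "\<And>q. q \<in> {1..<j} \<Longrightarrow> Ab j q \<in> carrier_mat (n j) (n q)"
    using plant j by (auto simp: plant_def)
  have zh: "zh a b t \<in> carrier_vec (n b)" if "a \<in> {1..N}" "b \<in> {1..N}" for a b t
    using fresh_run_estimate_carrier[OF run gains that] .
  show ?thesis
    using w tau
  proof (induction m arbitrary: w k)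
    case 0
    have "w = j"
      using fresh_run_Some[OF graph run j 0(1) _ 0(2)] by auto
    then have "zh w j k = (Ab j j ^\<^sub>m 0) *\<^sub>v zh j j (k - 0)
        + vsum (n j) (\<lambda>q. vsum (n j)
            (\<lambda>t. (Ab j j ^\<^sub>m (k - t - 1) * Ab j q) *\<^sub>v zh w q t) {k - 0..<k}) {1..<j}"
      using A zh[OF j j, of k] by simp
    then show ?case by auto
  next
    case (Suc m)
    have w: "w \<noteq> j"
      using run j Suc.prems(2) by (auto simp: fresh_run_def)
    obtain k' u where k: "k = Suc k'" and u: "u \<in> {1..N}" "tau j u k' = Some m"
      and adopt: "zh w j k = adopt_upd n Ab zh j w u k'"
      using fresh_run_Some[OF graph run j Suc.prems(1) w Suc.prems(2)] by blast
    obtain v where v: "\<forall>t\<in>{k' - m..<k'}. v t \<in> {1..N} - {j}"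
      and IH: "zh u j k' = (Ab j j ^\<^sub>m m) *\<^sub>v zh j j (k' - m)
        + vsum (n j) (\<lambda>q. vsum (n j)
            (\<lambda>t. (Ab j j ^\<^sub>m (k' - t - 1) * Ab j q) *\<^sub>v zh (v t) q t) {k' - m..<k'}) {1..<j}"
      using Suc.IH[OF u] by blast
    define v' where "v' = v(k' := w)"
    have v': "\<forall>t\<in>{k - Suc m..<k}. v' t \<in> {1..N} - {j}"
      using v w Suc.prems(1) k by (auto simp: v'_def)
    have g: "zh (v' t) q t \<in> carrier_vec (n q)" if "q \<in> {1..<j}" "t \<in> {Suc k' - Suc m..<Suc k'}" for q t
      using zh[of "v' t" q t] v' that j k by auto
    have "zh w j k = Ab j j *\<^sub>v ((Ab j j ^\<^sub>m m) *\<^sub>v zh j j (Suc k' - Suc m)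
        + vsum (n j) (\<lambda>q. vsum (n j)
            (\<lambda>t. (Ab j j ^\<^sub>m (k' - t - 1) * Ab j q) *\<^sub>v zh (v' t) q t) {k' - m..<k'}) {1..<j})
        + vsum (n j) (\<lambda>q. Ab j q *\<^sub>v zh (v' k') q k') {1..<j}"
    proof -
      have "vsum (n j) (\<lambda>t. (Ab j j ^\<^sub>m (k' - t - 1) * Ab j q) *\<^sub>v zh (v t) q t) {k' - m..<k'}
          = vsum (n j) (\<lambda>t. (Ab j j ^\<^sub>m (k' - t - 1) * Ab j q) *\<^sub>v zh (v' t) q t) {k' - m..<k'}"
        for q by (rule vsum_cong) (simp add: v'_def)
      then show ?thesis unfolding adopt adopt_upd_def IH by (simp add: v'_def)
    qed
    also have "\<dots> = (Ab j j ^\<^sub>m Suc m) *\<^sub>v zh j j (k - Suc m)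
        + vsum (n j) (\<lambda>q. vsum (n j)
            (\<lambda>t. (Ab j j ^\<^sub>m (k - t - 1) * Ab j q) *\<^sub>v zh (v' t) q t) {k - Suc m..<k}) {1..<j}"
      using closed_form_Suc[where Q = "{1..<j}" and g = "\<lambda>q t. zh (v' t) q t"
          and x = "zh j j (k' - m)" and k = k' and m = m, OF A zh[OF j j] B g] k by simp
    finally show ?case using v' by blast
  qed
qed

theorem lemma4:
  fixes N :: nat and E :: "nat \<Rightarrow> (nat \<times> nat) set"
    and n p :: "nat \<Rightarrow> nat"
    and Ab C :: "nat \<Rightarrow> nat \<Rightarrow> real mat" and L :: "nat \<Rightarrow> real mat"
    and z y :: "nat \<Rightarrow> nat \<Rightarrow> real vec"
    and tau :: "nat \<Rightarrow> nat \<Rightarrow> nat \<Rightarrow> nat option"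
    and zh :: "nat \<Rightarrow> nat \<Rightarrow> nat \<Rightarrow> real vec"
    and j i k m :: nat
  assumes graph: "\<forall>k. E k \<subseteq> {1..N} \<times> {1..N}"
    and plant: "plant N n p Ab C z y"
    and gains: "\<forall>j\<in>{1..N}. L j \<in> carrier_mat (n j) (p j)"
    and run: "fresh_run N E n Ab C L y tau zh"
    and j: "j \<in> {1..N}" and i: "i \<in> {1..N}" "i \<noteq> j"
    and m: "m \<ge> 1"
    and tau_im: "tau j i k = Some m"
  shows "\<exists>v. (\<forall>t\<in>{k - m..<k}. v t \<in> {1..N} - {j}) \<and>
    zh i j k = (Ab j j ^\<^sub>m m) *\<^sub>v zh j j (k - m)
      + vsum (n j) (\<lambda>q. vsum (n j)
          (\<lambda>t. (Ab j j ^\<^sub>m (k - t - 1) * Ab j q) *\<^sub>v zh (v t) q t) {k - m..<k}) {1..<j}"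
  using fresh_run_closed_form[OF graph plant gains run j i(1) tau_im] .

end
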